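(* Let $\mathcal F$ be any family of linear functionals on $\mathbb R^n$ and $\Sigma_{\mathcal F}=\bigcap_{\ell\in\mathcal F}\{\mathbf v\in\mathbb R^n:\ \ell(\mathbf v)\ge0\}$. If a solution of system (CSF) has $\mathbf v_i(0)\in\Sigma_{\mathcal F}$ for all $i$, then $\mathbf v_i(t)\in\Sigma_{\mathcal F}$ for all $i$ and all $t\ge0$.
   Context: Fix integers $N\ge1$, $n\ge1$, masses $m_1,\dots,m_N>0$ with $M=\sum_i m_i$, parameters $\sigma>0$, $p>0$, $\kappa\ge0$, and a communication kernel $\phi:[0,\infty)\to(0,\infty)$ that is smooth, positive and non-increasing. Write $\phi_{ij}=\phi(|\mathbf x_i-\mathbf x_j|)$, with $|\cdot|$ the Euclidean norm on $\mathbb R^n$. System (CSF) is, for $i=1,\dots,N$, $$\dot{\mathbf x}_i=\mathbf v_i,\qquad \dot{\mathbf v}_i=\sum_{j=1}^N m_j\phi_{ij}(\mathbf v_j-\mathbf v_i)+\sigma(\theta_i-|\mathbf v_i|^p)\mathbf v_i,\qquad \dot\theta_i=\kappa\sum_{j=1}^N m_j\phi_{ij}(\theta_j-\theta_i),$$ with $\mathbf x_i,\mathbf v_i\in\mathbb R^n$ and initial values $\theta_i(0)>0$; solutions are considered for $t\ge0$. *)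

theory Defs
  imports "HOL-Analysis.Analysis"
begin

definition smooth_on_nonneg :: "(real \<Rightarrow> real) \<Rightarrow> bool" where
  "smooth_on_nonneg f \<longleftrightarrow> (\<exists>D :: nat \<Rightarrow> real \<Rightarrow> real. D 0 = f \<and>
     (\<forall>k. \<forall>t\<ge>0. (D k has_real_derivative D (Suc k) t) (at t within {0..})))"

definition comm_kernel :: "(real \<Rightarrow> real) \<Rightarrow> bool" where
  "comm_kernel \<phi> \<longleftrightarrow> smooth_on_nonneg \<phi> \<and> (\<forall>r\<ge>0. \<phi> r > 0) \<and>
     (\<forall>r s. 0 \<le> r \<longrightarrow> r \<le> s \<longrightarrow> \<phi> s \<le> \<phi> r)"

text \<open>Solutions of system (CSF) for t \<ge> 0. Agents are indexed by a finite type 'i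
  (so N = CARD('i) \<ge> 1), positions/velocities lie in real^'n.\<close>
definition CSF_solution ::
  "('i::finite \<Rightarrow> real) \<Rightarrow> real \<Rightarrow> real \<Rightarrow> real \<Rightarrow> (real \<Rightarrow> real) \<Rightarrow>
   ('i \<Rightarrow> real \<Rightarrow> real^'n) \<Rightarrow> ('i \<Rightarrow> real \<Rightarrow> real^'n) \<Rightarrow> ('i \<Rightarrow> real \<Rightarrow> real) \<Rightarrow> bool" where
  "CSF_solution m \<sigma> p \<kappa> \<phi> x v \<theta> \<longleftrightarrow>
     (\<forall>i. \<forall>t\<ge>0.
        (x i has_vector_derivative v i t) (at t within {0..}) \<and>
        (v i has_vector_derivative
            ((\<Sum>j\<in>UNIV. (m j * \<phi> (norm (x i t - x j t))) *\<^sub>R (v j t - v i t))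
             + (\<sigma> * (\<theta> i t - norm (v i t) powr p)) *\<^sub>R v i t)) (at t within {0..}) \<and>
        (\<theta> i has_real_derivative
            (\<kappa> * (\<Sum>j\<in>UNIV. m j * \<phi> (norm (x i t - x j t)) * (\<theta> j t - \<theta> i t))))
            (at t within {0..}))"

definition Sigma_F :: "(('a::real_vector) \<Rightarrow> real) set \<Rightarrow> 'a set" where
  "Sigma_F F = (\<Inter>l\<in>F. {w. l w \<ge> 0})"

end

theory Submission
  imports Defs
begin

text \<open>For every functional l in F the scalars w_i = l(v_i) obey a linear cooperative system
  w_i' = \<Sum>_j a_ij (w_j - w_i) + b_i w_i with a_ij = m_j \<phi>_ij \<ge> 0 and b_i = \<sigma>(\<theta>_i - |v_i|^p),
  which is bounded above on compact time intervals because \<theta>_i is continuous. Such systems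
  preserve nonnegativity: after the perturbation w_i + \<epsilon> e^{(L+1)t} all components start
  positive, and at the first time one of them reaches zero its derivative would be positive,
  which is impossible. Letting \<epsilon> \<rightarrow> 0 gives l(v_i(t)) \<ge> 0.\<close>

lemma first_zero_of_continuous_family:
  fixes z :: "'i::finite \<Rightarrow> real \<Rightarrow> real"
  assumes cont: "\<And>i. continuous_on {0..T} (z i)"
    and pos0: "\<And>i. z i 0 > 0"
    and hit: "t \<in> {0..T}" "z k t \<le> 0"
  obtains s i where "0 < s" "s \<le> T" "z i s = 0"
    "\<And>j t. 0 \<le> t \<Longrightarrow> t < s \<Longrightarrow> z j t > 0" "\<And>j. z j s \<ge> 0"
proof -
  define S where "S = {t\<in>{0..T}. \<exists>i. z i t \<le> 0}"
  have "closed {t\<in>{0..T}. z i t \<le> 0}" for i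
    using continuous_on_closed_Collect_le[OF cont continuous_on_const closed_atLeastAtMost] by simp
  moreover have "S = (\<Union>i. {t\<in>{0..T}. z i t \<le> 0})"
    unfolding S_def by auto
  ultimately have "closed S"
    by (simp add: closed_UN)
  moreover have "bdd_below S" "S \<noteq> {}"
    using hit unfolding S_def by (auto intro!: bdd_belowI[of _ 0])
  ultimately have "Inf S \<in> S"
    using closed_contains_Inf by blast
  define s where "s = Inf S"
  obtain i where s: "0 \<le> s" "s \<le> T" "z i s \<le> 0"
    using \<open>Inf S \<in> S\<close> unfolding s_def S_def by auto
  have before: "z j t > 0" if "0 \<le> t" "t < s" for j t
  proof (rule ccontr)
    assume "\<not> z j t > 0"
    then have "t \<in> S" using that s unfolding S_def by (auto simp: not_less)
    then show False
      using cInf_lower[OF _ \<open>bdd_below S\<close>] that unfolding s_def by force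
  qed
  have "s \<noteq> 0" using s pos0[of i] by auto
  then have "0 < s" using s by simp
  have at_s: "z j s \<ge> 0" for j
  proof (rule ccontr)
    assume neg: "\<not> z j s \<ge> 0"
    have "continuous_on {0..s} (\<lambda>t. - z j t)"
      using cont[of j] s by (intro continuous_on_minus) (auto elim: continuous_on_subset)
    then obtain t where "0 \<le> t" "t \<le> s" "z j t = 0"
      using IVT'[of "\<lambda>t. - z j t" 0 0 s] neg pos0[of j] \<open>0 < s\<close> by auto
    with neg before[of t j] show False
      by (cases "t = s") auto
  qed
  show thesis
    using that[of s i] \<open>0 < s\<close> s before at_s by (meson antisym)
qed

lemma cooperative_system_perturbed_pos:
  fixes w :: "'i::finite \<Rightarrow> real \<Rightarrow> real" and a :: "'i \<Rightarrow> 'i \<Rightarrow> real \<Rightarrow> real"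
    and b :: "'i \<Rightarrow> real \<Rightarrow> real"
  assumes deriv: "\<And>i t. t \<ge> 0 \<Longrightarrow> (w i has_real_derivative
        (\<Sum>j\<in>UNIV. a i j t * (w j t - w i t)) + b i t * w i t) (at t within {0..})"
    and a_nonneg: "\<And>i j t. t \<ge> 0 \<Longrightarrow> a i j t \<ge> 0"
    and b_le: "\<And>i t. 0 \<le> t \<Longrightarrow> t \<le> T \<Longrightarrow> b i t \<le> L"
    and w0: "\<And>i. w i 0 \<ge> 0" and "\<epsilon> > 0"
    and t: "t \<in> {0..T}"
  shows "w i t + \<epsilon> * exp ((L + 1) * t) > 0"
proof (rule ccontr)
  define z where "z i t = w i t + \<epsilon> * exp ((L + 1) * t)" for i t
  have z_deriv: "(z i has_real_derivative
        (\<Sum>j\<in>UNIV. a i j t * (z j t - z i t)) + b i t * z i t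
          + \<epsilon> * exp ((L + 1) * t) * (L + 1 - b i t)) (at t within {0..})"
    if "t \<ge> 0" for i t
  proof -
    have "(z i has_real_derivative
        ((\<Sum>j\<in>UNIV. a i j t * (w j t - w i t)) + b i t * w i t)
          + \<epsilon> * (exp ((L + 1) * t) * (L + 1))) (at t within {0..})"
      unfolding z_def[abs_def]
      by (intro derivative_intros deriv that) (auto intro!: derivative_eq_intros)
    then show ?thesis
      by (simp add: z_def algebra_simps)
  qed
  have z_cont: "continuous_on {0..T} (z i)" for i
    by (rule DERIV_continuous_on[where D="\<lambda>t. _ t"],
        rule has_field_derivative_subset[OF z_deriv]) auto
  have z0: "z i 0 > 0" for i
    using w0[of i] \<open>\<epsilon> > 0\<close> by (simp add: z_def)
  assume "\<not> w i t + \<epsilon> * exp ((L + 1) * t) > 0"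
  then have "z i t \<le> 0" by (simp add: z_def)
  then obtain s k where s: "0 < s" "s \<le> T" "z k s = 0"
    and before: "\<And>j t. 0 \<le> t \<Longrightarrow> t < s \<Longrightarrow> z j t > 0" and at_s: "\<And>j. z j s \<ge> 0"
    using first_zero_of_continuous_family[of T z, OF z_cont z0 t] by blast
  have "b k s \<le> L" using b_le s by auto
  then have "0 < (\<Sum>j\<in>UNIV. a k j s * (z j s - z k s)) + b k s * z k s
      + \<epsilon> * exp ((L + 1) * s) * (L + 1 - b k s)"
    using s at_s a_nonneg[of s] \<open>\<epsilon> > 0\<close>
    by (intro add_nonneg_pos sum_nonneg) (auto intro!: sum_nonneg mult_nonneg_nonneg mult_pos_pos)
  then obtain d where "d > 0" and dec: "\<And>h. h > 0 \<Longrightarrow> s - h \<ge> 0 \<Longrightarrow> h < d \<Longrightarrow> z k (s - h) < 0"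
    using has_real_derivative_pos_inc_left[OF z_deriv[of s k]] s by auto
  define h where "h = min (d / 2) s"
  have "h > 0" "h < d" "s - h \<ge> 0"
    using \<open>d > 0\<close> s by (auto simp: h_def)
  then show False
    using dec[of h] before[of "s - h" k] by auto
qed

lemma cooperative_system_nonneg:
  fixes w :: "'i::finite \<Rightarrow> real \<Rightarrow> real" and a :: "'i \<Rightarrow> 'i \<Rightarrow> real \<Rightarrow> real"
    and b :: "'i \<Rightarrow> real \<Rightarrow> real"
  assumes deriv: "\<And>i t. t \<ge> 0 \<Longrightarrow> (w i has_real_derivative
        (\<Sum>j\<in>UNIV. a i j t * (w j t - w i t)) + b i t * w i t) (at t within {0..})"
    and a_nonneg: "\<And>i j t. t \<ge> 0 \<Longrightarrow> a i j t \<ge> 0"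
    and b_bounded: "\<And>T. \<exists>L. \<forall>i t. 0 \<le> t \<longrightarrow> t \<le> T \<longrightarrow> b i t \<le> L"
    and w0: "\<And>i. w i 0 \<ge> 0"
    and "t \<ge> 0"
  shows "w i t \<ge> 0"
proof (rule ccontr)
  assume neg: "\<not> w i t \<ge> 0"
  obtain L where b_le: "\<And>j s. 0 \<le> s \<Longrightarrow> s \<le> t \<Longrightarrow> b j s \<le> L"
    using b_bounded[of t] by blast
  define \<epsilon> where "\<epsilon> = - w i t / (2 * exp ((L + 1) * t))"
  have "\<epsilon> > 0"
    using neg unfolding \<epsilon>_def by (simp add: divide_neg_pos)
  then have "w i t + \<epsilon> * exp ((L + 1) * t) > 0"
    using cooperative_system_perturbed_pos[OF deriv a_nonneg b_le w0] \<open>t \<ge> 0\<close> by simp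
  then show False
    using neg unfolding \<epsilon>_def by simp
qed

lemma CSF_functional_of_velocity_deriv:
  assumes "CSF_solution m \<sigma> p \<kappa> \<phi> x v \<theta>" and "linear l" and "t \<ge> 0"
  shows "((\<lambda>t. l (v i t)) has_real_derivative
      (\<Sum>j\<in>UNIV. m j * \<phi> (norm (x i t - x j t)) * (l (v j t) - l (v i t)))
        + \<sigma> * (\<theta> i t - norm (v i t) powr p) * l (v i t)) (at t within {0..})"
proof -
  have "((\<lambda>t. l (v i t)) has_vector_derivative l
      ((\<Sum>j\<in>UNIV. (m j * \<phi> (norm (x i t - x j t))) *\<^sub>R (v j t - v i t))
        + (\<sigma> * (\<theta> i t - norm (v i t) powr p)) *\<^sub>R v i t)) (at t within {0..})"
    using bounded_linear.has_vector_derivative[of l] assms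
    unfolding CSF_solution_def linear_conv_bounded_linear by blast
  then show ?thesis
    using \<open>linear l\<close>
    by (simp add: has_real_derivative_iff_has_vector_derivative linear_add linear_sum
        linear_scale linear_diff)
qed

lemma CSF_theta_bounded_above:
  assumes "CSF_solution m \<sigma> p \<kappa> \<phi> x v \<theta>"
  shows "\<exists>B. \<forall>i t. 0 \<le> t \<longrightarrow> t \<le> T \<longrightarrow> \<theta> i t \<le> B"
proof -
  have "continuous_on {0..T} (\<theta> i)" for i
    by (rule DERIV_continuous_on[where D="\<lambda>s. _ s"],
        rule has_field_derivative_subset[of _ _ _ "{0..}"])
      (use assms in \<open>auto simp: CSF_solution_def\<close>)
  then have "\<exists>B. \<forall>t\<in>{0..T}. \<theta> i t \<le> B" for i
    using continuous_attains_sup[OF compact_Icc, of 0 T "\<theta> i"] by (cases "T \<ge> 0") force+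
  then obtain B where B: "\<And>i t. t \<in> {0..T} \<Longrightarrow> \<theta> i t \<le> B i"
    by metis
  have "\<theta> i t \<le> Max (range B)" if "0 \<le> t" "t \<le> T" for i t
  proof -
    have "\<theta> i t \<le> B i" using B that by simp
    also have "\<dots> \<le> Max (range B)" by (simp add: Max_ge)
    finally show ?thesis .
  qed
  then show ?thesis by blast
qed

lemma CSF_growth_rate_bounded_above:
  assumes "CSF_solution m \<sigma> p \<kappa> \<phi> x v \<theta>" and "\<sigma> \<ge> 0"
  shows "\<exists>L. \<forall>i t. 0 \<le> t \<longrightarrow> t \<le> T \<longrightarrow> \<sigma> * (\<theta> i t - norm (v i t) powr p) \<le> L"
proof -
  obtain B where B: "\<And>i t. 0 \<le> t \<Longrightarrow> t \<le> T \<Longrightarrow> \<theta> i t \<le> B"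
    using CSF_theta_bounded_above[OF assms(1)] by blast
  have "\<sigma> * (\<theta> i t - norm (v i t) powr p) \<le> \<sigma> * B" if "0 \<le> t" "t \<le> T" for i t
  proof -
    have "\<theta> i t - norm (v i t) powr p \<le> B"
      using B[OF that, of i] powr_ge_zero[of "norm (v i t)" p] by linarith
    then show ?thesis
      using \<open>\<sigma> \<ge> 0\<close> by (simp add: mult_left_mono)
  qed
  then show ?thesis by blast
qed

theorem lemma2p1:
  fixes m :: "'i::finite \<Rightarrow> real" and \<sigma> p \<kappa> :: real and \<phi> :: "real \<Rightarrow> real"
    and x v :: "'i \<Rightarrow> real \<Rightarrow> real^'n" and \<theta> :: "'i \<Rightarrow> real \<Rightarrow> real"
    and F :: "(real^'n \<Rightarrow> real) set"
  assumes "\<forall>i. m i > 0" and "\<sigma> > 0" and "p > 0" and "\<kappa> \<ge> 0"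
    and "comm_kernel \<phi>"
    and "\<forall>l\<in>F. linear l"
    and "CSF_solution m \<sigma> p \<kappa> \<phi> x v \<theta>"
    and "\<forall>i. \<theta> i 0 > 0"
    and "\<forall>i. v i 0 \<in> Sigma_F F"
  shows "\<forall>i. \<forall>t\<ge>0. v i t \<in> Sigma_F F"
proof (intro allI impI)
  fix i and t :: real assume "t \<ge> 0"
  have "\<phi> r > 0" if "r \<ge> 0" for r
    using assms(5) that unfolding comm_kernel_def by blast
  then have a_nonneg: "m j * \<phi> (norm (x i s - x j s)) \<ge> 0" for i j s
    using assms(1) by (simp add: less_imp_le)
  have "l (v i t) \<ge> 0" if "l \<in> F" for l
    using cooperative_system_nonneg[where w="\<lambda>i s. l (v i s)", OF
        CSF_functional_of_velocity_deriv[OF assms(7)] a_nonneg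
        CSF_growth_rate_bounded_above[OF assms(7)] _ \<open>t \<ge> 0\<close>]
      assms(2,6,9) that unfolding Sigma_F_def by auto
  then show "v i t \<in> Sigma_F F"
    unfolding Sigma_F_def by blast
qed

end
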